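(* Let $k\ge1$ and let $g$ be a variable of type level $k+2$. If $\Gamma\vdash t$ is $g$-regular and ${\mathrm{PCF}}^\Omega_k$-denotable, then any inductive generation of the denotability of $\Gamma\vdash t$ via the following six rules consists entirely of $g$-regular procedures-in-environment: 1. from denotable $\Gamma\vdash q_i$ ($i<r$) and $x\in\Gamma$, infer $\Gamma\vdash\lambda.\mathtt{case}\ x\,q_0\cdots q_{r-1}\ \mathtt{of}\ (j\Rightarrow j)$; 2. from $\Gamma,x\vdash p$ infer $\Gamma\vdash\lambda x.p$; 3. $\Gamma\vdash\lambda.n$; 4. from $\Gamma\vdash p$ and $f:\mathbb{N}\rightharpoonup\mathbb{N}$ infer $\Gamma\vdash p[i\mapsto f(i)]$; 5. from $\Gamma\vdash p$, $\Gamma\vdash\lambda.d$, $\Gamma\vdash\lambda.e$ infer $\Gamma\vdash p[0\mapsto d,\ i+1\mapsto e]$; 6. from $\Gamma\vdash\lambda z^\sigma x_0^{\sigma_0}\cdots x_{r-1}^{\sigma_{r-1}}.e$ with $\sigma=\sigma_0,\ldots,\sigma_{r-1}\rightarrow\mathbb{N}$ of level $\le k$ and $\Gamma\vdash q_i:\sigma_i$, infer $\Gamma\vdash\lambda.\langle\!\langle\Pi_{\Gamma,Z}(e,\xi)\rangle\!\rangle$ where $Z=z,\vec x$ is disjoint from $\Gamma$, $\xi(z)=\lambda\vec x.e$, $\xi(x_i)=q_i$.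
   Context: Levels: ${\mathrm{lv}}(\mathbb{N})=0$, ${\mathrm{lv}}(\sigma\rightarrow\tau)=\max({\mathrm{lv}}\,\sigma+1,{\mathrm{lv}}\,\tau)$. ${\mathrm{PCF}}^\Omega_k$: simply typed $\lambda$-calculus over $\mathbb{N}$ with $\underline n,\mathit{suc},\mathit{pre},\mathit{ifzero}$, oracle constants $C_f$ ($f:\mathbb{N}\rightharpoonup\mathbb{N}$) and $Y_\sigma$ only for ${\mathrm{lv}}(\sigma)\le k$. NSPs: coinductively generated well-typed trees $p::=\lambda\vec x.e$, $e::=\bot\mid n\mid\mathtt{case}\ a\ \mathtt{of}\ (i\Rightarrow e_i\mid i\in\mathbb{N})$, $a::=x\,q_0\cdots q_{r-1}$, modulo $\alpha$; $\langle\!\langle-\rangle\!\rangle$ is evaluation of meta-terms (limit of reduction by $\beta$, $\mathtt{case}\ \bot\rightsquigarrow\bot$, $\mathtt{case}\ n\ \mathtt{of}(i\Rightarrow E_i)\rightsquigarrow E_n$, case-of-case commutation). A procedure-in-environment $\Gamma\vdash p$ is ${\mathrm{PCF}}^\Omega_k$-denotable if $p=[\![M]\!]_\Gamma$ for a ${\mathrm{PCF}}^\Omega_k$ term $\Gamma\vdash M$ under the standard NSP interpretation ($[\![x]\!]=x^\eta$ with $x^\eta=\lambda\vec z.\mathtt{case}\ x\vec z^{\,\eta}\ \mathtt{of}(i\Rightarrow i)$, $[\![\lambda x.M]\!]=\lambda x.[\![M]\!]$, $[\![MN]\!]=[\![M]\!]\cdot[\![N]\!]$ with $(\lambda x_0\cdots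 x_r.e)\cdot q=\lambda x_1\cdots x_r.\langle\!\langle e[x_0\mapsto q]\rangle\!\rangle$, constants by their standard procedures). $t[i\mapsto e_i]$ replaces each rightward numeral leaf $i$ of $t$ (leaves reached only through $\lambda$-bodies and case branches) by $e_i$. Plugging $\Pi_{\Gamma,Z}(e,\xi)=\bigsqcup_m(\Pi^m)^\circ$ where $\Pi^0=e$, $\Pi^{m+1}=\Pi^m[z\mapsto\xi(z)\ \forall z\in Z]$ and $T^\circ$ replaces each ground subterm $z\vec Q$ ($z\in Z$) by $\bot$. $g$-regular: an environment is $g$-regular if it contains $g$ and otherwise only variables of level $\le k$; a term is $g$-regular if all its free and bound variables are of level $\le k$ except possibly free occurrences of $g$; $\Gamma\vdash t$ is $g$-regular if both are. *)

theory Defs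
  imports Main
begin

datatype ty = N | Arr ty ty

fun lv :: "ty \<Rightarrow> nat" where
  "lv N = 0"
| "lv (Arr s t) = max (lv s + 1) (lv t)"

fun args :: "ty \<Rightarrow> ty list" where
  "args N = []"
| "args (Arr s t) = s # args t"

type_synonym var = "nat \<times> ty"

section \<open>NSPs and meta-terms (locally nameless, multi-binder de Bruijn)\<close>

datatype vr = BV nat nat | FV var

codatatype tm =
    Lam (ltys: "ty list") (lbody: tm)
  | Bot
  | Num (nval: nat)
  | VCase (vvar: vr) (vargs: "tm list") (vbr: "nat \<Rightarrow> tm")
  | ACase (afun: tm) (aargs: "tm list") (abr: "nat \<Rightarrow> tm")
  | MCase (msubj: tm) (mbr: "nat \<Rightarrow> tm")

primcorec vmap :: "(nat \<Rightarrow> vr \<Rightarrow> vr + tm) \<Rightarrow> nat \<Rightarrow> tm \<Rightarrow> tm" where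
  "vmap \<rho> d t = (case t of
      Lam tys b \<Rightarrow> Lam tys (vmap \<rho> (Suc d) b)
    | Bot \<Rightarrow> Bot
    | Num n \<Rightarrow> Num n
    | VCase v qs bs \<Rightarrow> (case \<rho> d v of
          Inl v' \<Rightarrow> VCase v' (map (vmap \<rho> d) qs) (vmap \<rho> d \<circ> bs)
        | Inr q \<Rightarrow> ACase q (map (vmap \<rho> d) qs) (vmap \<rho> d \<circ> bs))
    | ACase p qs bs \<Rightarrow> ACase (vmap \<rho> d p) (map (vmap \<rho> d) qs) (vmap \<rho> d \<circ> bs)
    | MCase s bs \<Rightarrow> MCase (vmap \<rho> d s) (vmap \<rho> d \<circ> bs))"

definition ptype :: "tm \<Rightarrow> ty" where
  "ptype t = (case t of Lam tys _ \<Rightarrow> foldr Arr tys N | _ \<Rightarrow> N)"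

fun shiftv :: "nat \<Rightarrow> nat \<Rightarrow> vr \<Rightarrow> vr" where
  "shiftv c n (BV i j) = (if c \<le> i then BV (i + n) j else BV i j)"
| "shiftv c n (FV x) = FV x"

definition shift :: "nat \<Rightarrow> tm \<Rightarrow> tm" where
  "shift n t = vmap (\<lambda>d v. Inl (shiftv d n v)) 0 t"

text \<open>instantiation of the body b of \<lambda>xs.b by the list qs (\<beta>-reduction)\<close>
definition inst :: "tm \<Rightarrow> tm list \<Rightarrow> tm" where
  "inst b qs = vmap (\<lambda>d v. case v of
       BV i j \<Rightarrow> (if i = d then Inr (shift d (qs ! j))
                  else if d < i then Inl (BV (i - 1) j) else Inl (BV i j))
     | FV x \<Rightarrow> Inl (FV x)) 0 b"

text \<open>one step of head reduction on meta-expressions: \<beta>, case-of-\<bottom>, case-of-n, case-of-case\<close>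
definition hstep :: "tm \<Rightarrow> tm option" where
  "hstep t = (case t of
      ACase p qs bs \<Rightarrow> (case p of
          Lam tys b \<Rightarrow> (if length tys = length qs then Some (MCase (inst b qs) bs) else None)
        | _ \<Rightarrow> None)
    | MCase s bs \<Rightarrow> (case s of
          Bot \<Rightarrow> Some Bot
        | Num n \<Rightarrow> Some (bs n)
        | VCase v qs cs \<Rightarrow> Some (VCase v qs (\<lambda>i. MCase (cs i) bs))
        | ACase p qs cs \<Rightarrow> Some (ACase p qs (\<lambda>i. MCase (cs i) bs))
        | MCase s' cs \<Rightarrow> Some (MCase s' (\<lambda>i. MCase (cs i) bs))
        | Lam _ _ \<Rightarrow> None)
    | _ \<Rightarrow> None)"

fun hiter :: "nat \<Rightarrow> tm \<Rightarrow> tm" where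
  "hiter 0 t = t"
| "hiter (Suc n) t = (case hstep (hiter n t) of None \<Rightarrow> hiter n t | Some t' \<Rightarrow> t')"

definition is_hnf :: "tm \<Rightarrow> bool" where
  "is_hnf t = (case t of Bot \<Rightarrow> True | Num _ \<Rightarrow> True | VCase _ _ _ \<Rightarrow> True | _ \<Rightarrow> False)"

text \<open>head normal form; \<bottom> if head reduction does not terminate (or gets stuck)\<close>
definition hnorm :: "tm \<Rightarrow> tm" where
  "hnorm t = (if \<exists>n. is_hnf (hiter n t) then hiter (LEAST n. is_hnf (hiter n t)) t else Bot)"

definition pre_eval :: "tm \<Rightarrow> tm" where
  "pre_eval t = (case t of Lam _ _ \<Rightarrow> t | _ \<Rightarrow> hnorm t)"

text \<open>\<langle>\<langle>-\<rangle>\<rangle>: evaluation of a meta-term to an NSP (Boehm-tree style limit of reduction)\<close>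
primcorec eval :: "tm \<Rightarrow> tm" where
  "eval t = (case pre_eval t of
      Lam tys b \<Rightarrow> Lam tys (eval b)
    | Num n \<Rightarrow> Num n
    | VCase v qs bs \<Rightarrow> VCase v (map eval qs) (eval \<circ> bs)
    | _ \<Rightarrow> Bot)"

definition lubstart :: "(nat \<Rightarrow> tm) \<Rightarrow> nat" where
  "lubstart c = (LEAST m. c m \<noteq> Bot)"

definition lubhd :: "(nat \<Rightarrow> tm) \<Rightarrow> tm" where
  "lubhd c = (if \<exists>m. c m \<noteq> Bot then c (lubstart c) else Bot)"

definition ltail :: "(nat \<Rightarrow> tm) \<Rightarrow> nat \<Rightarrow> tm" where
  "ltail c m = c (lubstart c + m)"

text \<open>the supremum of an increasing chain (w.r.t. the order generated by \<bottom> \<le> t)\<close>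
primcorec lub :: "(nat \<Rightarrow> tm) \<Rightarrow> tm" where
  "lub c = (case lubhd c of
      Lam tys b \<Rightarrow> Lam tys (lub (\<lambda>m. lbody (ltail c m)))
    | Bot \<Rightarrow> Bot
    | Num n \<Rightarrow> Num n
    | VCase v qs bs \<Rightarrow> VCase v (map (\<lambda>j. lub (\<lambda>m. vargs (ltail c m) ! j)) [0..<length qs])
                         (\<lambda>i. lub (\<lambda>m. vbr (ltail c m) i))
    | ACase p qs bs \<Rightarrow> ACase (lub (\<lambda>m. afun (ltail c m)))
                         (map (\<lambda>j. lub (\<lambda>m. aargs (ltail c m) ! j)) [0..<length qs])
                         (\<lambda>i. lub (\<lambda>m. abr (ltail c m) i))
    | MCase s bs \<Rightarrow> MCase (lub (\<lambda>m. msubj (ltail c m))) (\<lambda>i. lub (\<lambda>m. mbr (ltail c m) i)))"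


definition rr_pre :: "(nat \<Rightarrow> tm) \<Rightarrow> bool \<Rightarrow> tm \<Rightarrow> tm" where
  "rr_pre f b t = (case t of Num n \<Rightarrow> (if b then f n else t) | _ \<Rightarrow> t)"

definition rr_mode :: "bool \<Rightarrow> tm \<Rightarrow> bool" where
  "rr_mode b t = (b \<and> \<not> is_Num t)"

text \<open>rr f True t = t[i \<mapsto> f i]: replace every rightward numeral leaf i (reached only through
  \<lambda>-bodies and case branches) by f i; in mode False the term is copied unchanged\<close>
primcorec rr :: "(nat \<Rightarrow> tm) \<Rightarrow> bool \<Rightarrow> tm \<Rightarrow> tm" where
  "rr f b t = (case rr_pre f b t of
      Lam tys e \<Rightarrow> Lam tys (rr f (rr_mode b t) e)
    | Bot \<Rightarrow> Bot
    | Num n \<Rightarrow> Num n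
    | VCase v qs bs \<Rightarrow> VCase v (map (rr f False) qs) (rr f (rr_mode b t) \<circ> bs)
    | ACase p qs bs \<Rightarrow> ACase (rr f False p) (map (rr f False) qs) (rr f (rr_mode b t) \<circ> bs)
    | MCase s bs \<Rightarrow> MCase (rr f False s) (rr f (rr_mode b t) \<circ> bs))"

definition replace_leaves :: "tm \<Rightarrow> (nat \<Rightarrow> tm) \<Rightarrow> tm" where
  "replace_leaves t f = rr f True t"

text \<open>T\<degree>: replace every ground subterm z Q (z a variable of the block Z, which is the outermost
  bound level, i.e. level d at depth d) by \<bottom>\<close>
primcorec circ :: "nat \<Rightarrow> tm \<Rightarrow> tm" where
  "circ d t = (case t of
      Lam tys b \<Rightarrow> Lam tys (circ (Suc d) b)
    | Bot \<Rightarrow> Bot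
    | Num n \<Rightarrow> Num n
    | VCase v qs bs \<Rightarrow> (if v \<in> {BV d j | j. True} then Bot
                         else VCase v (map (circ d) qs) (circ d \<circ> bs))
    | ACase p qs bs \<Rightarrow> ACase (circ d p) (map (circ d) qs) (circ d \<circ> bs)
    | MCase s bs \<Rightarrow> MCase (circ d s) (circ d \<circ> bs))"

text \<open>Given the body e of \<lambda>z x0..x(r-1).e (z = BV 0 0, x_i = BV 0 (i+1) at top level of e),
  the procedure \<xi>(z) = \<lambda>x.e, regarded in the context whose innermost block is Z\<close>
definition xi_z :: "ty list \<Rightarrow> tm \<Rightarrow> tm" where
  "xi_z \<sigma>s e = Lam \<sigma>s (vmap (\<lambda>d v. case v of
       BV i j \<Rightarrow> (if i = d then (if j = 0 then Inl (BV (Suc d) 0) else Inl (BV d (j - 1)))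
                  else if d < i then Inl (BV (Suc i) j) else Inl (BV i j))
     | FV x \<Rightarrow> Inl (FV x)) 0 e)"

text \<open>one plugging step: T[z \<mapsto> \<xi>(z), x_i \<mapsto> q_i]\<close>
definition plug_step :: "ty list \<Rightarrow> tm \<Rightarrow> tm list \<Rightarrow> tm \<Rightarrow> tm" where
  "plug_step \<sigma>s e qs t = vmap (\<lambda>d v. case v of
       BV i j \<Rightarrow> (if i = d then (if j = 0 then Inr (shift d (xi_z \<sigma>s e)) else Inr (shift d (qs ! (j - 1))))
                  else Inl (BV i j))
     | FV x \<Rightarrow> Inl (FV x)) 0 t"

definition Plug :: "ty list \<Rightarrow> tm \<Rightarrow> tm list \<Rightarrow> tm" where
  "Plug \<sigma>s e qs = lub (\<lambda>m. circ 0 ((plug_step \<sigma>s e qs ^^ m) e))"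

fun incv :: "vr \<Rightarrow> vr" where
  "incv (BV i j) = BV (Suc i) j"
| "incv (FV x) = FV x"

text \<open>\<eta>-expansion x^\<eta> = \<lambda>z. case x z^\<eta> of (i \<Rightarrow> i) of a variable of type \<tau>;
  etas \<tau> off = the \<eta>-expansions of the variables BV 0 off, BV 0 (off+1), ... of types args \<tau>\<close>
fun eta :: "ty \<Rightarrow> vr \<Rightarrow> tm" and etas :: "ty \<Rightarrow> nat \<Rightarrow> tm list" where
  "eta \<tau> v = Lam (args \<tau>) (VCase (incv v) (etas \<tau> 0) Num)"
| "etas N off = []"
| "etas (Arr a b) off = eta a (BV 0 off) # etas b (Suc off)"

text \<open>\<lambda>x.p for a procedure p = \<lambda>ys.e: the procedure \<lambda>x ys.e\<close>
definition close :: "var \<Rightarrow> tm \<Rightarrow> tm" where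
  "close x t = (case t of
      Lam tys e \<Rightarrow> Lam (snd x # tys) (vmap (\<lambda>d v. case v of
          FV y \<Rightarrow> (if y = x then Inl (BV d 0) else Inl (FV y))
        | BV i j \<Rightarrow> (if i = d then Inl (BV d (Suc j)) else Inl (BV i j))) 0 e)
    | _ \<Rightarrow> t)"

text \<open>(\<lambda>x0 ... xr.e) \<cdot> q = \<lambda>x1 ... xr. \<langle>\<langle>e[x0 \<mapsto> q]\<rangle>\<rangle>\<close>
definition papp :: "tm \<Rightarrow> tm \<Rightarrow> tm" where
  "papp p q = (case p of
      Lam tys e \<Rightarrow> (case tys of
          [] \<Rightarrow> Lam [] Bot
        | \<sigma> # tys' \<Rightarrow> Lam tys' (eval (vmap (\<lambda>d v. case v of
              BV i j \<Rightarrow> (if i = d then (if j = 0 then Inr (shift (Suc d) q) else Inl (BV d (j - 1)))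
                         else Inl (BV i j))
            | FV y \<Rightarrow> Inl (FV y)) 0 e)))
    | _ \<Rightarrow> Lam [] Bot)"

text \<open>finite approximants of the standard procedure for Y_\<sigma>\<close>
fun YA :: "ty \<Rightarrow> nat \<Rightarrow> nat \<Rightarrow> tm" where
  "YA \<sigma> 0 n = Lam (args \<sigma>) Bot"
| "YA \<sigma> (Suc m) n = Lam (args \<sigma>) (VCase (BV n 0) (YA \<sigma> m (Suc n) # etas \<sigma> 0) Num)"

text \<open>Y_\<sigma> = \<lambda>f x. case f \<Phi> x^\<eta> of (i \<Rightarrow> i) with \<Phi> = \<lambda>y. case f \<Phi> y^\<eta> of (i \<Rightarrow> i)\<close>
definition Yproc :: "ty \<Rightarrow> tm" where
  "Yproc \<sigma> = lub (\<lambda>m. Lam (Arr \<sigma> \<sigma> # args \<sigma>) (VCase (BV 0 0) (YA \<sigma> m 1 # etas \<sigma> 1) Num))"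

datatype pcf =
    PV var
  | PLam var pcf
  | PAp pcf pcf
  | PNum nat
  | PSuc
  | PPre
  | PIfz
  | POr "nat \<Rightarrow> nat option"
  | PY ty

inductive pcf_ty :: "nat \<Rightarrow> var set \<Rightarrow> pcf \<Rightarrow> ty \<Rightarrow> bool" for k where
  "x \<in> \<Gamma> \<Longrightarrow> pcf_ty k \<Gamma> (PV x) (snd x)"
| "pcf_ty k (insert x \<Gamma>) M \<tau> \<Longrightarrow> pcf_ty k \<Gamma> (PLam x M) (Arr (snd x) \<tau>)"
| "pcf_ty k \<Gamma> M (Arr \<sigma> \<tau>) \<Longrightarrow> pcf_ty k \<Gamma> N' \<sigma> \<Longrightarrow> pcf_ty k \<Gamma> (PAp M N') \<tau>"
| "pcf_ty k \<Gamma> (PNum n) N"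
| "pcf_ty k \<Gamma> PSuc (Arr N N)"
| "pcf_ty k \<Gamma> PPre (Arr N N)"
| "pcf_ty k \<Gamma> PIfz (Arr N (Arr N (Arr N N)))"
| "pcf_ty k \<Gamma> (POr f) (Arr N N)"
| "lv \<sigma> \<le> k \<Longrightarrow> pcf_ty k \<Gamma> (PY \<sigma>) (Arr (Arr \<sigma> \<sigma>) \<sigma>)"

fun interp :: "pcf \<Rightarrow> tm" where
  "interp (PV x) = eta (snd x) (FV x)"
| "interp (PLam x M) = close x (interp M)"
| "interp (PAp M N') = papp (interp M) (interp N')"
| "interp (PNum n) = Lam [] (Num n)"
| "interp PSuc = Lam [N] (VCase (BV 0 0) [] (\<lambda>i. Num (Suc i)))"
| "interp PPre = Lam [N] (VCase (BV 0 0) [] (\<lambda>i. Num (i - 1)))"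
| "interp PIfz = Lam [N, N, N] (VCase (BV 0 0) []
      (\<lambda>i. if i = 0 then VCase (BV 0 1) [] Num else VCase (BV 0 2) [] Num))"
| "interp (POr f) = Lam [N] (VCase (BV 0 0) [] (\<lambda>i. case f i of None \<Rightarrow> Bot | Some n \<Rightarrow> Num n))"
| "interp (PY \<sigma>) = Yproc \<sigma>"

definition denotable :: "nat \<Rightarrow> var set \<Rightarrow> tm \<Rightarrow> bool" where
  "denotable k \<Gamma> p \<longleftrightarrow> (\<exists>M \<tau>. pcf_ty k \<Gamma> M \<tau> \<and> interp M = p)"

coinductive reg_tm :: "nat \<Rightarrow> var \<Rightarrow> tm \<Rightarrow> bool" for k g where
  "(\<forall>\<sigma>\<in>set tys. lv \<sigma> \<le> k) \<Longrightarrow> reg_tm k g b \<Longrightarrow> reg_tm k g (Lam tys b)"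
| "reg_tm k g Bot"
| "reg_tm k g (Num n)"
| "(\<forall>x. v = FV x \<longrightarrow> x = g \<or> lv (snd x) \<le> k) \<Longrightarrow> (\<forall>q\<in>set qs. reg_tm k g q) \<Longrightarrow>
     (\<forall>i. reg_tm k g (bs i)) \<Longrightarrow> reg_tm k g (VCase v qs bs)"
| "reg_tm k g p \<Longrightarrow> (\<forall>q\<in>set qs. reg_tm k g q) \<Longrightarrow>
     (\<forall>i. reg_tm k g (bs i)) \<Longrightarrow> reg_tm k g (ACase p qs bs)"
| "reg_tm k g s \<Longrightarrow> (\<forall>i. reg_tm k g (bs i)) \<Longrightarrow> reg_tm k g (MCase s bs)"

definition g_regular :: "nat \<Rightarrow> var \<Rightarrow> var set \<Rightarrow> tm \<Rightarrow> bool" where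
  "g_regular k g \<Gamma> t \<longleftrightarrow> g \<in> \<Gamma> \<and> (\<forall>v\<in>\<Gamma>. v \<noteq> g \<longrightarrow> lv (snd v) \<le> k) \<and> reg_tm k g t"

type_synonym judg = "var set \<times> tm"

definition rule_ok :: "nat \<Rightarrow> judg \<Rightarrow> judg list \<Rightarrow> bool" where
  "rule_ok k c cs \<longleftrightarrow>
    \<comment> \<open>rule 1\<close>
    (\<exists>\<Gamma> x qs. c = (\<Gamma>, Lam [] (VCase (FV x) qs Num)) \<and> x \<in> \<Gamma> \<and>
        length qs = length (args (snd x)) \<and> (\<forall>i<length qs. ptype (qs ! i) = args (snd x) ! i) \<and>
        cs = map (\<lambda>q. (\<Gamma>, q)) qs)
    \<comment> \<open>rule 2\<close>
  \<or> (\<exists>\<Gamma> x p. x \<notin> \<Gamma> \<and> c = (\<Gamma>, close x p) \<and> cs = [(insert x \<Gamma>, p)])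
    \<comment> \<open>rule 3\<close>
  \<or> (\<exists>\<Gamma> n. c = (\<Gamma>, Lam [] (Num n)) \<and> cs = [])
    \<comment> \<open>rule 4\<close>
  \<or> (\<exists>\<Gamma> p f. c = (\<Gamma>, replace_leaves p (\<lambda>i. case f i of None \<Rightarrow> Bot | Some n \<Rightarrow> Num n)) \<and>
        cs = [(\<Gamma>, p)])
    \<comment> \<open>rule 5\<close>
  \<or> (\<exists>\<Gamma> p d e. c = (\<Gamma>, replace_leaves p (\<lambda>i. if i = 0 then d else e)) \<and>
        cs = [(\<Gamma>, p), (\<Gamma>, Lam [] d), (\<Gamma>, Lam [] e)])
    \<comment> \<open>rule 6\<close>
  \<or> (\<exists>\<Gamma> \<sigma>s e qs. lv (foldr Arr \<sigma>s N) \<le> k \<and> length qs = length \<sigma>s \<and>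
        (\<forall>i<length qs. ptype (qs ! i) = \<sigma>s ! i) \<and>
        c = (\<Gamma>, Lam [] (eval (Plug \<sigma>s e qs))) \<and>
        cs = (\<Gamma>, Lam (foldr Arr \<sigma>s N # \<sigma>s) e) # map (\<lambda>q. (\<Gamma>, q)) qs)"

datatype dtree = DNode judg "dtree list"

fun dconcl :: "dtree \<Rightarrow> judg" where
  "dconcl (DNode c ts) = c"

fun valid_deriv :: "nat \<Rightarrow> dtree \<Rightarrow> bool" where
  "valid_deriv k (DNode c ts) \<longleftrightarrow> rule_ok k c (map dconcl ts) \<and> (\<forall>t\<in>set ts. valid_deriv k t)"

fun dnodes :: "dtree \<Rightarrow> judg list" where
  "dnodes (DNode c ts) = c # concat (map dnodes ts)"

end

theory Submission
  imports Defs
begin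

text \<open>A \<open>g\<close>-regular conclusion has all its top-level binders of level \<open>\<le> k\<close>, and this property
  passes from the conclusion of each rule to its premises: the environment only grows by
  \<open>\<lambda>\<close>-bound variables of level \<open>\<le> k\<close> (rule 2), and the argument procedures of rules 1 and 6
  have types of level \<open>\<le> k + 1\<close>, being arguments of \<open>g\<close> (of level \<open>k + 2\<close>), of a variable of
  level \<open>\<le> k\<close>, or of a procedure whose type has level \<open>\<le> k\<close>. Conversely, every operation that builds a
  conclusion from its premises (\<open>\<beta>\<close>-reduction and evaluation, leaf replacement, and plugging as
  the limit of a chain of approximants) preserves the invariant that all binders have level
  \<open>\<le> k\<close> and all free variables are \<open>g\<close> or of level \<open>\<le> k\<close>, so it propagates from the leaves
  back to the root.\<close>

definition reg_vr :: "nat \<Rightarrow> var \<Rightarrow> nat list \<Rightarrow> vr \<Rightarrow> bool" where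
  "reg_vr k g Ls v \<longleftrightarrow> (case v of
      BV i j \<Rightarrow> i < length Ls \<and> j < Ls ! i
    | FV x \<Rightarrow> x = g \<or> lv (snd x) \<le> k)"

definition scoped_reg_step ::
    "nat \<Rightarrow> var \<Rightarrow> (nat list \<Rightarrow> tm \<Rightarrow> bool) \<Rightarrow> nat list \<Rightarrow> tm \<Rightarrow> bool" where
  "scoped_reg_step k g R Ls t \<longleftrightarrow> (case t of
      Lam tys b \<Rightarrow> (\<forall>\<sigma>\<in>set tys. lv \<sigma> \<le> k) \<and> R (length tys # Ls) b
    | Bot \<Rightarrow> True
    | Num _ \<Rightarrow> True
    | VCase v qs bs \<Rightarrow> reg_vr k g Ls v \<and> (\<forall>q\<in>set qs. R Ls q) \<and> (\<forall>i. R Ls (bs i))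
    | ACase p qs bs \<Rightarrow> R Ls p \<and> (\<forall>q\<in>set qs. R Ls q) \<and> (\<forall>i. R Ls (bs i))
    | MCase s bs \<Rightarrow> R Ls s \<and> (\<forall>i. R Ls (bs i)))"

lemma scoped_reg_step_mono:
  "(\<And>Ls t. R Ls t \<longrightarrow> R' Ls t) \<Longrightarrow> scoped_reg_step k g R Ls t \<longrightarrow> scoped_reg_step k g R' Ls t"
  by (auto simp: scoped_reg_step_def split: tm.splits)

text \<open>\<open>Ls\<close> lists the arities of the enclosing binder blocks, innermost first. Bound variables
  must be in scope because the substitutions look them up with \<open>!\<close>, which yields an
  unspecified term out of range.\<close>
coinductive scoped_reg :: "nat \<Rightarrow> var \<Rightarrow> nat list \<Rightarrow> tm \<Rightarrow> bool" for k g where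
  "scoped_reg_step k g (scoped_reg k g) Ls t \<Longrightarrow> scoped_reg k g Ls t"
  monos scoped_reg_step_mono

lemma scoped_reg_iff: "scoped_reg k g Ls t \<longleftrightarrow> scoped_reg_step k g (scoped_reg k g) Ls t"
  by (subst scoped_reg.simps) blast

lemma scoped_reg_simps [simp]:
  "scoped_reg k g Ls (Lam tys b) \<longleftrightarrow> (\<forall>\<sigma>\<in>set tys. lv \<sigma> \<le> k) \<and> scoped_reg k g (length tys # Ls) b"
  "scoped_reg k g Ls Bot"
  "scoped_reg k g Ls (Num n)"
  "scoped_reg k g Ls (VCase v qs bs) \<longleftrightarrow>
     reg_vr k g Ls v \<and> (\<forall>q\<in>set qs. scoped_reg k g Ls q) \<and> (\<forall>i. scoped_reg k g Ls (bs i))"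
  "scoped_reg k g Ls (ACase p qs bs) \<longleftrightarrow>
     scoped_reg k g Ls p \<and> (\<forall>q\<in>set qs. scoped_reg k g Ls q) \<and> (\<forall>i. scoped_reg k g Ls (bs i))"
  "scoped_reg k g Ls (MCase s bs) \<longleftrightarrow> scoped_reg k g Ls s \<and> (\<forall>i. scoped_reg k g Ls (bs i))"
  by (subst scoped_reg_iff; simp add: scoped_reg_step_def)+

lemma scoped_reg_coinduct [consumes 1, case_names step]:
  assumes "X Ls t"
    and "\<And>Ls t. X Ls t \<Longrightarrow> scoped_reg_step k g (\<lambda>L u. X L u \<or> scoped_reg k g L u) Ls t"
  shows "scoped_reg k g Ls t"
  using assms(1)
proof (rule scoped_reg.coinduct)
  fix Ls t
  assume "X Ls t"
  then show "\<exists>Ls' t'. Ls = Ls' \<and> t = t' \<and>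
      scoped_reg_step k g (\<lambda>L u. X L u \<or> scoped_reg k g L u) Ls' t'"
    using assms(2) by blast
qed

lemma scoped_reg_reg_tm: "scoped_reg k g Ls t \<Longrightarrow> reg_tm k g t"
proof (coinduction arbitrary: Ls t rule: reg_tm.coinduct)
  case (reg_tm Ls t)
  then show ?case
    by (cases t) (auto simp: reg_vr_def split: vr.splits)
qed

lemma vmap_simps:
  "vmap \<rho> d (Lam tys b) = Lam tys (vmap \<rho> (Suc d) b)"
  "vmap \<rho> d Bot = Bot"
  "vmap \<rho> d (Num n) = Num n"
  "\<rho> d v = Inl v' \<Longrightarrow> vmap \<rho> d (VCase v qs bs) = VCase v' (map (vmap \<rho> d) qs) (vmap \<rho> d \<circ> bs)"
  "\<rho> d v = Inr q \<Longrightarrow> vmap \<rho> d (VCase v qs bs) = ACase q (map (vmap \<rho> d) qs) (vmap \<rho> d \<circ> bs)"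
  "vmap \<rho> d (ACase p qs bs) = ACase (vmap \<rho> d p) (map (vmap \<rho> d) qs) (vmap \<rho> d \<circ> bs)"
  "vmap \<rho> d (MCase s bs) = MCase (vmap \<rho> d s) (vmap \<rho> d \<circ> bs)"
  by (subst vmap.code; simp)+

lemma vmap_Inl: "vmap (\<lambda>_. Inl) d t = t"
proof (coinduction arbitrary: d t)
  case Eq_tm
  then show ?case
    by (cases t) (auto simp: vmap_simps list.rel_map rel_fun_def intro!: list.rel_refl_strong)
qed

lemma scoped_reg_vmap_depth:
  assumes reg_\<rho>: "\<And>A v. reg_vr k g (A @ Bin) v \<Longrightarrow> (case \<rho> (length A) v of
        Inl v' \<Rightarrow> reg_vr k g (A @ Bout) v'
      | Inr q \<Rightarrow> scoped_reg k g (A @ Bout) q)"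
    and "scoped_reg k g (A @ Bin) t"
  shows "scoped_reg k g (A @ Bout) (vmap \<rho> (length A) t)"
proof -
  define X where "X L u \<longleftrightarrow> (\<exists>A t. L = A @ Bout \<and> u = vmap \<rho> (length A) t \<and> scoped_reg k g (A @ Bin) t)"
    for L u
  have "X (A @ Bout) (vmap \<rho> (length A) t)"
    using assms(2) unfolding X_def by blast
  then show ?thesis
  proof (induction rule: scoped_reg_coinduct)
    case (step L u)
    then obtain A t where L: "L = A @ Bout" and u: "u = vmap \<rho> (length A) t"
      and t: "scoped_reg k g (A @ Bin) t"
      unfolding X_def by blast
    have X_sub: "X L (vmap \<rho> (length A) t')" if "scoped_reg k g (A @ Bin) t'" for t'
      using that L unfolding X_def by blast
    show ?case
    proof (cases t)
      case (Lam tys b)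
      have "X (length tys # L) (vmap \<rho> (Suc (length A)) b)"
        using t Lam L unfolding X_def by (auto intro!: exI[of _ "length tys # A"])
      then show ?thesis
        using t Lam u by (simp add: vmap_simps scoped_reg_step_def)
    next
      case (VCase v qs bs)
      then have "reg_vr k g (A @ Bin) v" using t by simp
      from reg_\<rho>[OF this] show ?thesis
        using t VCase u L X_sub
        by (auto simp: vmap_simps scoped_reg_step_def split: sum.splits)
    qed (use t u X_sub in \<open>auto simp: vmap_simps scoped_reg_step_def\<close>)
  qed
qed

lemma scoped_reg_vmap:
  assumes "\<And>A v. reg_vr k g (A @ Bin) v \<Longrightarrow> (case \<rho> (length A) v of
        Inl v' \<Rightarrow> reg_vr k g (A @ Bout) v'
      | Inr q \<Rightarrow> scoped_reg k g (A @ Bout) q)"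
    and "scoped_reg k g Bin t"
  shows "scoped_reg k g Bout (vmap \<rho> 0 t)"
  using scoped_reg_vmap_depth[of k g Bin Bout \<rho> "[]"] assms by simp

lemma scoped_reg_mono:
  assumes "scoped_reg k g Ls t" and "\<And>A v. reg_vr k g (A @ Ls) v \<Longrightarrow> reg_vr k g (A @ Ls') v"
  shows "scoped_reg k g Ls' t"
  using scoped_reg_vmap[of k g Ls Ls' "\<lambda>_. Inl"] assms by (simp add: vmap_Inl)

lemma scoped_reg_empty_blocks:
  assumes "\<forall>n\<in>set B. n = 0" and "scoped_reg k g B t"
  shows "scoped_reg k g L t"
  using assms(2)
proof (rule scoped_reg_mono)
  fix A v
  assume v: "reg_vr k g (A @ B) v"
  show "reg_vr k g (A @ L) v"
  proof (cases v)
    case (BV i j)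
    have "i < length A"
    proof (rule ccontr)
      assume "\<not> i < length A"
      moreover have "i < length A + length B" using v BV by (simp add: reg_vr_def)
      ultimately have "(A @ B) ! i \<in> set B" by (simp add: nth_append)
      then have "(A @ B) ! i = 0" using assms(1) by blast
      then show False using v BV by (simp add: reg_vr_def)
    qed
    then show ?thesis using v BV by (simp add: reg_vr_def nth_append)
  qed (use v in \<open>simp add: reg_vr_def\<close>)
qed

lemma scoped_reg_closed: "scoped_reg k g [] t \<Longrightarrow> scoped_reg k g L t"
  by (rule scoped_reg_empty_blocks[of "[]"]) auto

lemma scoped_reg_shift:
  assumes "scoped_reg k g L q"
  shows "scoped_reg k g (A @ L) (shift (length A) q)"
proof -
  have "scoped_reg k g (A @ L) (vmap (\<lambda>d v. Inl (shiftv d (length A) v)) 0 q)"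
  proof (rule scoped_reg_vmap[where Bin = L])
    fix A' v
    assume "reg_vr k g (A' @ L) v"
    then show "case Inl (shiftv (length A') (length A) v) of
        Inl v' \<Rightarrow> reg_vr k g (A' @ A @ L) v' | Inr q \<Rightarrow> scoped_reg k g (A' @ A @ L) q"
      by (cases v) (auto simp: reg_vr_def nth_append)
  qed (rule assms)
  then show ?thesis by (simp add: shift_def)
qed

lemma scoped_reg_inst:
  assumes "scoped_reg k g (length qs # Ls) b" and "\<forall>q\<in>set qs. scoped_reg k g Ls q"
  shows "scoped_reg k g Ls (inst b qs)"
proof -
  let ?\<rho> = "\<lambda>d v. case v of
       BV i j \<Rightarrow> (if i = d then Inr (shift d (qs ! j))
                  else if d < i then Inl (BV (i - 1) j) else Inl (BV i j))
     | FV x \<Rightarrow> Inl (FV x)"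
  have "scoped_reg k g Ls (vmap ?\<rho> 0 b)"
  proof (rule scoped_reg_vmap[where Bin = "length qs # Ls"])
    fix A v
    assume v: "reg_vr k g (A @ length qs # Ls) v"
    show "case ?\<rho> (length A) v of Inl v' \<Rightarrow> reg_vr k g (A @ Ls) v'
        | Inr q \<Rightarrow> scoped_reg k g (A @ Ls) q"
    proof (cases v)
      case (BV i j)
      show ?thesis
      proof (cases "i = length A")
        case True
        then have "j < length qs" using v BV by (simp add: reg_vr_def nth_append)
        then show ?thesis using True BV scoped_reg_shift assms(2) by simp
      next
        case False
        then show ?thesis using v BV
          by (cases i) (auto simp: reg_vr_def nth_append nth_Cons' split: if_splits)
      qed
    qed (use v in \<open>simp add: reg_vr_def\<close>)
  qed (use assms(1) in simp)
  then show ?thesis by (simp add: inst_def)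
qed

lemma scoped_reg_hstep:
  assumes "scoped_reg k g Ls t" and "hstep t = Some t'"
  shows "scoped_reg k g Ls t'"
proof (cases t)
  case (ACase p qs bs)
  then obtain tys b where "p = Lam tys b" "length tys = length qs" "t' = MCase (inst b qs) bs"
    using assms(2) by (auto simp: hstep_def split: tm.splits if_splits)
  then show ?thesis using assms(1) ACase scoped_reg_inst[of k g qs Ls b] by simp
next
  case (MCase s bs)
  then show ?thesis using assms by (cases s) (auto simp: hstep_def)
qed (use assms in \<open>auto simp: hstep_def\<close>)

lemma scoped_reg_hiter: "scoped_reg k g Ls t \<Longrightarrow> scoped_reg k g Ls (hiter n t)"
  by (induction n) (auto split: option.splits intro: scoped_reg_hstep)

lemma scoped_reg_pre_eval: "scoped_reg k g Ls t \<Longrightarrow> scoped_reg k g Ls (pre_eval t)"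
  by (auto simp: pre_eval_def hnorm_def scoped_reg_hiter split: tm.splits)

lemma scoped_reg_eval:
  assumes "scoped_reg k g Ls t"
  shows "scoped_reg k g Ls (eval t)"
proof -
  define X where "X L u \<longleftrightarrow> (\<exists>t. u = eval t \<and> scoped_reg k g L t)" for L u
  have "X Ls (eval t)" using assms unfolding X_def by blast
  then show ?thesis
  proof (induction rule: scoped_reg_coinduct)
    case (step L u)
    then obtain t where u: "u = eval t" and t: "scoped_reg k g L (pre_eval t)"
      unfolding X_def using scoped_reg_pre_eval by blast
    show ?case
      using t unfolding u X_def
      by (cases "pre_eval t") (auto simp: eval.code scoped_reg_step_def)
  qed
qed

lemma scoped_reg_close:
  assumes "scoped_reg k g L (Lam tys e)" and "lv (snd x) \<le> k"
  shows "scoped_reg k g L (close x (Lam tys e))"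
proof -
  let ?\<rho> = "\<lambda>d v. case v of
          FV y \<Rightarrow> (if y = x then Inl (BV d 0) else Inl (FV y))
        | BV i j \<Rightarrow> (if i = d then Inl (BV d (Suc j)) else Inl (BV i j))"
  have "scoped_reg k g (Suc (length tys) # L) (vmap ?\<rho> 0 e)"
  proof (rule scoped_reg_vmap[where Bin = "length tys # L"])
    fix A v
    assume "reg_vr k g (A @ length tys # L) v"
    then show "case ?\<rho> (length A) v of Inl v' \<Rightarrow> reg_vr k g (A @ Suc (length tys) # L) v'
        | Inr q \<Rightarrow> scoped_reg k g (A @ Suc (length tys) # L) q"
      using assms(2) by (cases v) (auto simp: reg_vr_def nth_append)
  qed (use assms(1) in simp)
  then show ?thesis using assms by (simp add: close_def)
qed

lemma rr_Lam: "rr f b (Lam tys e) = Lam tys (rr f b e)"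
  by (subst rr.code) (simp add: rr_pre_def rr_mode_def)

lemma scoped_reg_replace_leaves:
  assumes "scoped_reg k g L t" and "\<And>i L. scoped_reg k g L (f i)"
  shows "scoped_reg k g L (replace_leaves t f)"
proof -
  define X where "X L u \<longleftrightarrow> (\<exists>b t. u = rr f b t \<and> scoped_reg k g L t)" for L u
  have "X L (rr f True t)" using assms unfolding X_def by blast
  then have "scoped_reg k g L (rr f True t)"
  proof (induction rule: scoped_reg_coinduct)
    case (step L u)
    then obtain b t where u: "u = rr f b t" and t: "scoped_reg k g L t" unfolding X_def by blast
    then have "scoped_reg k g L (rr_pre f b t)"
      using assms(2) by (auto simp: rr_pre_def split: tm.splits)
    then show ?case
      unfolding u X_def by (cases "rr_pre f b t") (auto simp: rr.code scoped_reg_step_def)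
  qed
  then show ?thesis by (simp add: replace_leaves_def)
qed

lemma circ_simps:
  "circ d (Lam tys b) = Lam tys (circ (Suc d) b)"
  "circ d Bot = Bot"
  "circ d (Num n) = Num n"
  "circ d (VCase v qs bs) =
     (if \<exists>j. v = BV d j then Bot else VCase v (map (circ d) qs) (circ d \<circ> bs))"
  "circ d (ACase p qs bs) = ACase (circ d p) (map (circ d) qs) (circ d \<circ> bs)"
  "circ d (MCase s bs) = MCase (circ d s) (circ d \<circ> bs)"
  by (subst circ.code; auto)+

lemma scoped_reg_circ:
  assumes "scoped_reg k g (A @ [a]) t"
  shows "scoped_reg k g A (circ (length A) t)"
proof -
  define X where "X L u \<longleftrightarrow> (\<exists>t. u = circ (length L) t \<and> scoped_reg k g (L @ [a]) t)" for L u
  have "X A (circ (length A) t)" using assms unfolding X_def by blast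
  then show ?thesis
  proof (induction rule: scoped_reg_coinduct)
    case (step L u)
    then obtain t where u: "u = circ (length L) t" and t: "scoped_reg k g (L @ [a]) t"
      unfolding X_def by blast
    show ?case
    proof (cases t)
      case (Lam tys b)
      then show ?thesis using t unfolding u X_def by (auto simp: circ_simps scoped_reg_step_def)
    next
      case (VCase v qs bs)
      show ?thesis
      proof (cases "\<exists>j. v = BV (length L) j")
        case False
        then have "reg_vr k g L v" using t VCase
          by (cases v) (auto simp: reg_vr_def nth_append less_Suc_eq)
        then show ?thesis
          using False t VCase unfolding u X_def by (auto simp: circ_simps scoped_reg_step_def)
      qed (simp add: u VCase circ_simps scoped_reg_step_def)
    qed (use t in \<open>auto simp: u X_def circ_simps scoped_reg_step_def\<close>)
  qed
qed

lemma scoped_reg_xi_z: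
  assumes "scoped_reg k g [Suc (length \<sigma>s)] e" and "\<forall>\<sigma>\<in>set \<sigma>s. lv \<sigma> \<le> k"
  shows "scoped_reg k g [Suc (length \<sigma>s)] (xi_z \<sigma>s e)"
proof -
  let ?\<rho> = "\<lambda>d v. case v of
       BV i j \<Rightarrow> (if i = d then (if j = 0 then Inl (BV (Suc d) 0) else Inl (BV d (j - 1)))
                  else if d < i then Inl (BV (Suc i) j) else Inl (BV i j))
     | FV x \<Rightarrow> Inl (FV x)"
  have "scoped_reg k g [length \<sigma>s, Suc (length \<sigma>s)] (vmap ?\<rho> 0 e)"
  proof (rule scoped_reg_vmap[where Bin = "[Suc (length \<sigma>s)]"])
    fix A v
    assume "reg_vr k g (A @ [Suc (length \<sigma>s)]) v"
    then show "case ?\<rho> (length A) v of Inl v' \<Rightarrow> reg_vr k g (A @ [length \<sigma>s, Suc (length \<sigma>s)]) v'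
        | Inr q \<Rightarrow> scoped_reg k g (A @ [length \<sigma>s, Suc (length \<sigma>s)]) q"
      by (cases v) (auto simp: reg_vr_def nth_append less_Suc_eq)
  qed (rule assms(1))
  then show ?thesis using assms by (simp add: xi_z_def)
qed

lemma scoped_reg_plug_step:
  assumes e: "scoped_reg k g [Suc (length \<sigma>s)] e" and \<sigma>s: "\<forall>\<sigma>\<in>set \<sigma>s. lv \<sigma> \<le> k"
    and qs: "length qs = length \<sigma>s" "\<forall>q\<in>set qs. scoped_reg k g [] q"
    and t: "scoped_reg k g [Suc (length \<sigma>s)] t"
  shows "scoped_reg k g [Suc (length \<sigma>s)] (plug_step \<sigma>s e qs t)"
proof -
  let ?\<rho> = "\<lambda>d v. case v of
       BV i j \<Rightarrow> (if i = d then (if j = 0 then Inr (shift d (xi_z \<sigma>s e)) else Inr (shift d (qs ! (j - 1))))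
                  else Inl (BV i j))
     | FV x \<Rightarrow> Inl (FV x)"
  have xi: "scoped_reg k g [Suc (length \<sigma>s)] (xi_z \<sigma>s e)"
    using scoped_reg_xi_z e \<sigma>s .
  have "scoped_reg k g [Suc (length \<sigma>s)] (vmap ?\<rho> 0 t)"
  proof (rule scoped_reg_vmap[where Bin = "[Suc (length \<sigma>s)]"])
    fix A v
    assume v: "reg_vr k g (A @ [Suc (length \<sigma>s)]) v"
    show "case ?\<rho> (length A) v of Inl v' \<Rightarrow> reg_vr k g (A @ [Suc (length \<sigma>s)]) v'
        | Inr q \<Rightarrow> scoped_reg k g (A @ [Suc (length \<sigma>s)]) q"
    proof (cases v)
      case (BV i j)
      show ?thesis
      proof (cases "i = length A")
        case True
        show ?thesis
        proof (cases j)
          case 0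
          then show ?thesis using True BV scoped_reg_shift[OF xi] by simp
        next
          case (Suc j')
          then have "j' < length qs" using v BV True qs(1) by (simp add: reg_vr_def nth_append)
          then have "scoped_reg k g [] (qs ! j')" using qs(2) by simp
          then have "scoped_reg k g [Suc (length \<sigma>s)] (qs ! j')" by (rule scoped_reg_closed)
          then show ?thesis using True BV Suc scoped_reg_shift by simp
        qed
      qed (use v BV in \<open>simp add: reg_vr_def\<close>)
    qed (use v in \<open>simp add: reg_vr_def\<close>)
  qed (use t in simp)
  then show ?thesis by (simp add: plug_step_def)
qed

definition approx_step :: "(tm \<Rightarrow> tm \<Rightarrow> bool) \<Rightarrow> tm \<Rightarrow> tm \<Rightarrow> bool" where
  "approx_step R a b \<longleftrightarrow> (case a of
      Bot \<Rightarrow> True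
    | Lam tys x \<Rightarrow> (\<exists>x'. b = Lam tys x' \<and> R x x')
    | Num n \<Rightarrow> b = Num n
    | VCase v qs bs \<Rightarrow> (\<exists>qs' bs'. b = VCase v qs' bs' \<and> list_all2 R qs qs' \<and> (\<forall>i. R (bs i) (bs' i)))
    | ACase p qs bs \<Rightarrow> (\<exists>p' qs' bs'. b = ACase p' qs' bs' \<and> R p p' \<and> list_all2 R qs qs' \<and>
        (\<forall>i. R (bs i) (bs' i)))
    | MCase s bs \<Rightarrow> (\<exists>s' bs'. b = MCase s' bs' \<and> R s s' \<and> (\<forall>i. R (bs i) (bs' i))))"

lemma approx_step_mono:
  "(\<And>a b. R a b \<longrightarrow> R' a b) \<Longrightarrow> approx_step R a b \<longrightarrow> approx_step R' a b"
  by (auto simp: approx_step_def split: tm.splits elim!: list_all2_mono)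

coinductive approx :: "tm \<Rightarrow> tm \<Rightarrow> bool" where
  "approx_step approx a b \<Longrightarrow> approx a b"
  monos approx_step_mono

lemma approx_simps:
  "approx Bot u"
  "approx (Lam tys b) u \<longleftrightarrow> (\<exists>b'. u = Lam tys b' \<and> approx b b')"
  "approx (Num n) u \<longleftrightarrow> u = Num n"
  "approx (VCase v qs bs) u \<longleftrightarrow>
     (\<exists>qs' bs'. u = VCase v qs' bs' \<and> list_all2 approx qs qs' \<and> (\<forall>i. approx (bs i) (bs' i)))"
  "approx (ACase p qs bs) u \<longleftrightarrow> (\<exists>p' qs' bs'. u = ACase p' qs' bs' \<and> approx p p' \<and>
     list_all2 approx qs qs' \<and> (\<forall>i. approx (bs i) (bs' i)))"
  "approx (MCase s bs) u \<longleftrightarrow>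
     (\<exists>s' bs'. u = MCase s' bs' \<and> approx s s' \<and> (\<forall>i. approx (bs i) (bs' i)))"
  by (subst approx.simps; simp add: approx_step_def)+

lemma approx_coinduct [consumes 1, case_names step]:
  assumes "X a b" and "\<And>a b. X a b \<Longrightarrow> approx_step (\<lambda>a b. X a b \<or> approx a b) a b"
  shows "approx a b"
  using assms(1)
proof (rule approx.coinduct)
  fix a b
  assume "X a b"
  then show "\<exists>a' b'. a = a' \<and> b = b' \<and> approx_step (\<lambda>a b. X a b \<or> approx a b) a' b'"
    using assms(2) by blast
qed

lemma approx_refl: "approx t t"
  by (rule approx_coinduct[where X = "(=)"])
    (auto simp: approx_step_def split: tm.splits intro: list.rel_refl_strong)

lemma approx_trans:
  assumes "approx a b" and "approx b c"
  shows "approx a c"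
proof -
  define X where "X a c \<longleftrightarrow> (\<exists>b. approx a b \<and> approx b c)" for a c
  have "X a c" using assms unfolding X_def by blast
  then show ?thesis
  proof (induction rule: approx_coinduct)
    case (step a c)
    then obtain b where ab: "approx a b" and bc: "approx b c" unfolding X_def by blast
    have rel: "list_all2 (\<lambda>a c. X a c \<or> approx a c) qs qs''"
      if "list_all2 approx qs qs'" "list_all2 approx qs' qs''" for qs qs' qs''
      by (rule list_all2_trans[OF _ that]) (auto simp: X_def)
    show ?case
    proof (cases a)
      case (Lam tys x)
      then show ?thesis using ab bc by (fastforce simp: approx_step_def approx_simps X_def)
    next
      case (Num n)
      then show ?thesis using ab bc by (simp add: approx_step_def approx_simps)
    next
      case (VCase v qs bs)
      then show ?thesis using ab bc rel by (fastforce simp: approx_step_def approx_simps X_def)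
    next
      case (ACase p qs bs)
      then show ?thesis using ab bc rel by (fastforce simp: approx_step_def approx_simps X_def)
    next
      case (MCase s bs)
      then show ?thesis using ab bc by (fastforce simp: approx_step_def approx_simps X_def)
    qed (simp add: approx_step_def)
  qed
qed

definition approx_chain :: "(nat \<Rightarrow> tm) \<Rightarrow> bool" where
  "approx_chain c \<longleftrightarrow> (\<forall>m n. m \<le> n \<longrightarrow> approx (c m) (c n))"

lemma approx_chainI:
  assumes "\<And>m. approx (c m) (c (Suc m))"
  shows "approx_chain c"
  unfolding approx_chain_def
proof (intro allI impI)
  fix m n :: nat
  assume "m \<le> n"
  then show "approx (c m) (c n)"
    by (induction n rule: dec_induct) (auto intro: approx_refl approx_trans assms)
qed

lemma approx_chain_Lam:
  assumes "approx_chain d" and "d 0 = Lam tys b"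
  shows "d m = Lam tys (lbody (d m))" and "approx_chain (\<lambda>m. lbody (d m))"
proof -
  have shape: "d m = Lam tys (lbody (d m))" for m
    using assms unfolding approx_chain_def by (metis approx_simps(2) tm.sel(2) zero_le)
  then show "d m = Lam tys (lbody (d m))" .
  show "approx_chain (\<lambda>m. lbody (d m))"
    unfolding approx_chain_def
  proof (intro allI impI)
    fix m n :: nat
    assume "m \<le> n"
    then have "approx (Lam tys (lbody (d m))) (Lam tys (lbody (d n)))"
      using assms(1) shape unfolding approx_chain_def by metis
    then show "approx (lbody (d m)) (lbody (d n))" by (simp add: approx_simps)
  qed
qed

lemma approx_chain_VCase:
  assumes "approx_chain d" and "d 0 = VCase v qs bs"
  shows "d m = VCase v (vargs (d m)) (vbr (d m))" and "length (vargs (d m)) = length qs"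
    and "j < length qs \<Longrightarrow> approx_chain (\<lambda>m. vargs (d m) ! j)"
    and "approx_chain (\<lambda>m. vbr (d m) i)"
proof -
  have 0: "approx (d 0) (d m)" for m using assms(1) by (simp add: approx_chain_def)
  show shape: "d m = VCase v (vargs (d m)) (vbr (d m))" for m
    using 0[of m] assms(2) by (auto simp: approx_simps)
  show len: "length (vargs (d m)) = length qs" for m
    using 0[of m] assms(2) by (auto simp: approx_simps dest: list_all2_lengthD)
  have step: "list_all2 approx (vargs (d m)) (vargs (d n)) \<and> (\<forall>i. approx (vbr (d m) i) (vbr (d n) i))"
    if "m \<le> n" for m n
    using that assms(1) shape[of m] shape[of n] unfolding approx_chain_def
    by (metis approx_simps(4) tm.inject(3))
  show "j < length qs \<Longrightarrow> approx_chain (\<lambda>m. vargs (d m) ! j)"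
    using step len by (auto simp: approx_chain_def list_all2_nthD)
  show "approx_chain (\<lambda>m. vbr (d m) i)"
    using step by (simp add: approx_chain_def)
qed

lemma approx_chain_ACase:
  assumes "approx_chain d" and "d 0 = ACase p qs bs"
  shows "d m = ACase (afun (d m)) (aargs (d m)) (abr (d m))" and "length (aargs (d m)) = length qs"
    and "approx_chain (\<lambda>m. afun (d m))"
    and "j < length qs \<Longrightarrow> approx_chain (\<lambda>m. aargs (d m) ! j)"
    and "approx_chain (\<lambda>m. abr (d m) i)"
proof -
  have 0: "approx (d 0) (d m)" for m using assms(1) by (simp add: approx_chain_def)
  show shape: "d m = ACase (afun (d m)) (aargs (d m)) (abr (d m))" for m
    using 0[of m] assms(2) by (auto simp: approx_simps)
  show len: "length (aargs (d m)) = length qs" for m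
    using 0[of m] assms(2) by (auto simp: approx_simps dest: list_all2_lengthD)
  have step: "approx (afun (d m)) (afun (d n)) \<and> list_all2 approx (aargs (d m)) (aargs (d n)) \<and>
      (\<forall>i. approx (abr (d m) i) (abr (d n) i))" if "m \<le> n" for m n
    using that assms(1) shape[of m] shape[of n] unfolding approx_chain_def
    by (metis approx_simps(5) tm.inject(4))
  show "approx_chain (\<lambda>m. afun (d m))"
    using step by (simp add: approx_chain_def)
  show "j < length qs \<Longrightarrow> approx_chain (\<lambda>m. aargs (d m) ! j)"
    using step len by (auto simp: approx_chain_def list_all2_nthD)
  show "approx_chain (\<lambda>m. abr (d m) i)"
    using step by (simp add: approx_chain_def)
qed

lemma approx_chain_MCase:
  assumes "approx_chain d" and "d 0 = MCase s bs"
  shows "d m = MCase (msubj (d m)) (mbr (d m))"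
    and "approx_chain (\<lambda>m. msubj (d m))" and "approx_chain (\<lambda>m. mbr (d m) i)"
proof -
  have 0: "approx (d 0) (d m)" for m using assms(1) by (simp add: approx_chain_def)
  show shape: "d m = MCase (msubj (d m)) (mbr (d m))" for m
    using 0[of m] assms(2) by (auto simp: approx_simps)
  have step: "approx (msubj (d m)) (msubj (d n)) \<and> (\<forall>i. approx (mbr (d m) i) (mbr (d n) i))"
    if "m \<le> n" for m n
    using that assms(1) shape[of m] shape[of n] unfolding approx_chain_def
    by (metis approx_simps(6) tm.inject(5))
  show "approx_chain (\<lambda>m. msubj (d m))" and "approx_chain (\<lambda>m. mbr (d m) i)"
    using step by (simp_all add: approx_chain_def)
qed

lemma lub_Bot: "\<forall>m. c m = Bot \<Longrightarrow> lub c = Bot"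
  by (subst lub.code) (simp add: lubhd_def)

lemma lub_ltail:
  assumes "\<exists>m. c m \<noteq> Bot" and "approx_chain c"
  shows "lubhd c = ltail c 0" and "ltail c 0 \<noteq> Bot" and "approx_chain (ltail c)"
proof -
  show "ltail c 0 \<noteq> Bot"
    using LeastI_ex[OF assms(1)] by (simp add: ltail_def lubstart_def)
  show "lubhd c = ltail c 0"
    using assms(1) by (simp add: lubhd_def ltail_def)
  show "approx_chain (ltail c)"
    using assms(2) by (simp add: approx_chain_def ltail_def)
qed

lemma scoped_reg_lub:
  assumes "approx_chain c" and "\<And>m. scoped_reg k g L (c m)"
  shows "scoped_reg k g L (lub c)"
proof -
  define X where "X L u \<longleftrightarrow> (\<exists>c. u = lub c \<and> approx_chain c \<and> (\<forall>m. scoped_reg k g L (c m)))"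
    for L u
  have "X L (lub c)" using assms unfolding X_def by blast
  then show ?thesis
  proof (induction rule: scoped_reg_coinduct)
    case (step L u)
    then obtain c where u: "u = lub c" and c: "approx_chain c" "\<forall>m. scoped_reg k g L (c m)"
      unfolding X_def by blast
    have X_lub: "X L' (lub e)" if "approx_chain e" "\<And>m. scoped_reg k g L' (e m)" for L' e
      using that unfolding X_def by blast
    show ?case
    proof (cases "\<forall>m. c m = Bot")
      case True
      then show ?thesis by (simp add: u lub_Bot scoped_reg_step_def)
    next
      case False
      define d where "d = ltail c"
      have hd: "lubhd c = d 0" and "d 0 \<noteq> Bot" and d: "approx_chain d"
        using lub_ltail[OF _ c(1)] False by (auto simp: d_def)
      have reg_d: "scoped_reg k g L (d m)" for m
        using c(2) by (simp add: d_def ltail_def)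
      show ?thesis
      proof (cases "d 0")
        case (Lam tys b)
        note shape = approx_chain_Lam[OF d Lam]
        have lub_c: "lub c = Lam tys (lub (\<lambda>m. lbody (d m)))"
          using hd Lam unfolding d_def by (subst lub.code) simp
        have "scoped_reg k g (length tys # L) (lbody (d m))" for m
          using reg_d[of m] shape(1)[of m] by (metis scoped_reg_simps(1))
        then have "X (length tys # L) (lub (\<lambda>m. lbody (d m)))" by (rule X_lub[OF shape(2)])
        then show ?thesis
          using lub_c reg_d[of 0] Lam by (simp add: u scoped_reg_step_def)
      next
        case (Num n)
        then have "lub c = Num n"
          using hd unfolding d_def by (subst lub.code) simp
        then show ?thesis by (simp add: u scoped_reg_step_def)
      next
        case (VCase v qs bs)
        note shape = approx_chain_VCase[OF d VCase]
        have lub_c: "lub c = VCase v (map (\<lambda>j. lub (\<lambda>m. vargs (d m) ! j)) [0..<length qs])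
            (\<lambda>i. lub (\<lambda>m. vbr (d m) i))"
          using hd VCase unfolding d_def by (subst lub.code) simp
        have args: "\<forall>q\<in>set (vargs (d m)). scoped_reg k g L q"
          and brs: "scoped_reg k g L (vbr (d m) i)" for m i
          using reg_d[of m] shape(1)[of m] by (metis scoped_reg_simps(4))+
        have "X L (lub (\<lambda>m. vargs (d m) ! j))" if "j < length qs" for j
          by (rule X_lub[OF shape(3)[OF that]]) (metis args shape(2) that nth_mem)
        moreover have "X L (lub (\<lambda>m. vbr (d m) i))" for i
          by (rule X_lub[OF shape(4) brs])
        ultimately show ?thesis
          using lub_c reg_d[of 0] VCase by (simp add: u scoped_reg_step_def)
      next
        case (ACase p qs bs)
        note shape = approx_chain_ACase[OF d ACase]
        have lub_c: "lub c = ACase (lub (\<lambda>m. afun (d m)))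
            (map (\<lambda>j. lub (\<lambda>m. aargs (d m) ! j)) [0..<length qs]) (\<lambda>i. lub (\<lambda>m. abr (d m) i))"
          using hd ACase unfolding d_def by (subst lub.code) simp
        have func: "scoped_reg k g L (afun (d m))"
          and args: "\<forall>q\<in>set (aargs (d m)). scoped_reg k g L q"
          and brs: "scoped_reg k g L (abr (d m) i)" for m i
          using reg_d[of m] shape(1)[of m] by (metis scoped_reg_simps(5))+
        have "X L (lub (\<lambda>m. afun (d m)))"
          by (rule X_lub[OF shape(3) func])
        moreover have "X L (lub (\<lambda>m. aargs (d m) ! j))" if "j < length qs" for j
          by (rule X_lub[OF shape(4)[OF that]]) (metis args shape(2) that nth_mem)
        moreover have "X L (lub (\<lambda>m. abr (d m) i))" for i
          by (rule X_lub[OF shape(5) brs])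
        ultimately show ?thesis using lub_c by (simp add: u scoped_reg_step_def)
      next
        case (MCase s bs)
        note shape = approx_chain_MCase[OF d MCase]
        have lub_c: "lub c = MCase (lub (\<lambda>m. msubj (d m))) (\<lambda>i. lub (\<lambda>m. mbr (d m) i))"
          using hd MCase unfolding d_def by (subst lub.code) simp
        have subj: "scoped_reg k g L (msubj (d m))"
          and brs: "scoped_reg k g L (mbr (d m) i)" for m i
          using reg_d[of m] shape(1)[of m] by (metis scoped_reg_simps(6))+
        have "X L (lub (\<lambda>m. msubj (d m)))"
          by (rule X_lub[OF shape(2) subj])
        moreover have "X L (lub (\<lambda>m. mbr (d m) i))" for i
          by (rule X_lub[OF shape(3) brs])
        ultimately show ?thesis using lub_c by (simp add: u scoped_reg_step_def)
      qed (use \<open>d 0 \<noteq> Bot\<close> in simp)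
    qed
  qed
qed

text \<open>A plugging step only rewrites references to the outermost block \<open>Z\<close>, which \<open>circ\<close>
  has already replaced by \<open>\<bottom>\<close>; hence the approximants of \<open>Plug\<close> form a chain.\<close>
lemma approx_circ_vmap:
  assumes "\<And>d v. (\<forall>j. v \<noteq> BV d j) \<Longrightarrow> \<rho> d v = Inl v"
  shows "approx (circ d t) (circ d (vmap \<rho> d t))"
proof -
  define X where "X a b \<longleftrightarrow> (\<exists>d t. a = circ d t \<and> b = circ d (vmap \<rho> d t))" for a b
  have "X (circ d t) (circ d (vmap \<rho> d t))" unfolding X_def by blast
  then show ?thesis
  proof (induction rule: approx_coinduct)
    case (step a b)
    then obtain d t where a: "a = circ d t" and b: "b = circ d (vmap \<rho> d t)"
      unfolding X_def by blast
    have list: "list_all2 (\<lambda>a b. X a b \<or> approx a b) (map (circ d) qs) (map (circ d \<circ> vmap \<rho> d) qs)"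
      for qs
      unfolding X_def by (auto simp: list.rel_map intro: list.rel_refl_strong)
    show ?case
    proof (cases t)
      case (VCase v qs bs)
      show ?thesis
      proof (cases "\<exists>j. v = BV d j")
        case False
        then have "\<rho> d v = Inl v" using assms by blast
        then show ?thesis
          using False list unfolding a b VCase X_def
          by (auto simp: circ_simps vmap_simps approx_step_def)
      qed (simp add: a VCase circ_simps approx_step_def)
    qed (use list in \<open>auto simp: a b X_def circ_simps vmap_simps approx_step_def\<close>)
  qed
qed

lemma scoped_reg_Plug:
  assumes "scoped_reg k g [Suc (length \<sigma>s)] e" and "\<forall>\<sigma>\<in>set \<sigma>s. lv \<sigma> \<le> k"
    and "length qs = length \<sigma>s" and "\<forall>q\<in>set qs. scoped_reg k g [] q"
  shows "scoped_reg k g [] (Plug \<sigma>s e qs)"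
  unfolding Plug_def
proof (rule scoped_reg_lub)
  show "approx_chain (\<lambda>m. circ 0 ((plug_step \<sigma>s e qs ^^ m) e))"
    by (rule approx_chainI) (auto simp: plug_step_def intro!: approx_circ_vmap split: vr.splits)
  fix m
  have "scoped_reg k g [Suc (length \<sigma>s)] ((plug_step \<sigma>s e qs ^^ m) e)"
    by (induction m) (use assms scoped_reg_plug_step in auto)
  then show "scoped_reg k g [] (circ 0 ((plug_step \<sigma>s e qs ^^ m) e))"
    using scoped_reg_circ[of k g "[]"] by simp
qed

definition reg_env :: "nat \<Rightarrow> var \<Rightarrow> var set \<Rightarrow> bool" where
  "reg_env k g \<Delta> \<longleftrightarrow> g \<in> \<Delta> \<and> (\<forall>v\<in>\<Delta>. v \<noteq> g \<longrightarrow> lv (snd v) \<le> k)"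

definition low_binders :: "nat \<Rightarrow> tm \<Rightarrow> bool" where
  "low_binders k p \<longleftrightarrow> (case p of Lam tys _ \<Rightarrow> \<forall>\<sigma>\<in>set tys. lv \<sigma> \<le> k | _ \<Rightarrow> True)"

lemma g_regular_iff: "g_regular k g \<Delta> p \<longleftrightarrow> reg_env k g \<Delta> \<and> reg_tm k g p"
  by (simp add: g_regular_def reg_env_def)

lemma reg_tm_low_binders: "reg_tm k g p \<Longrightarrow> low_binders k p"
  by (cases p) (auto simp: low_binders_def elim: reg_tm.cases)

lemma lv_foldr_Arr: "\<sigma> \<in> set tys \<Longrightarrow> lv \<sigma> < lv (foldr Arr tys N)"
  by (induction tys) auto

lemma lv_args: "i < length (args \<tau>) \<Longrightarrow> lv (args \<tau> ! i) < lv \<tau>"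
proof (induction \<tau> arbitrary: i)
  case (Arr s t)
  then show ?case by (cases i) fastforce+
qed simp

lemma low_binders_ptype: "lv (ptype q) \<le> Suc k \<Longrightarrow> low_binders k q"
  by (auto simp: low_binders_def ptype_def split: tm.splits dest!: lv_foldr_Arr)

lemma low_binders_replace_leaves: "low_binders k (replace_leaves p f) \<Longrightarrow> low_binders k p"
  by (cases p) (auto simp: low_binders_def replace_leaves_def rr_Lam)

lemma rule_ok_is_Lam:
  assumes "rule_ok k c cs" and "\<forall>(\<Delta>, p)\<in>set cs. is_Lam p"
  shows "is_Lam (snd c)"
  using assms unfolding rule_ok_def
  by (elim disjE exE conjE) (auto simp: close_def replace_leaves_def rr_Lam is_Lam_def)

lemma valid_deriv_is_Lam: "valid_deriv k T \<Longrightarrow> is_Lam (snd (dconcl T))"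
proof (induction T)
  case (DNode c ts)
  then have "\<forall>(\<Delta>, p)\<in>set (map dconcl ts). is_Lam p"
    by (auto simp: split_beta)
  moreover have "rule_ok k c (map dconcl ts)" using DNode.prems by simp
  ultimately have "is_Lam (snd c)" by (rule rule_ok_is_Lam[rotated])
  then show ?case by simp
qed

lemma rule_ok_premises_regular:
  assumes rule: "rule_ok k (\<Delta>, p) cs" and \<Delta>: "reg_env k g \<Delta>" and p: "low_binders k p"
    and g: "lv (snd g) = k + 2" and lam: "\<forall>(\<Delta>', p')\<in>set cs. is_Lam p'"
  shows "\<forall>(\<Delta>', p')\<in>set cs. reg_env k g \<Delta>' \<and> low_binders k p'"
  using rule unfolding rule_ok_def
proof (elim disjE exE conjE)
  fix \<Gamma> x qs
  assume c: "(\<Delta>, p) = (\<Gamma>, Lam [] (VCase (FV x) qs Num))" and "x \<in> \<Gamma>"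
    and len: "length qs = length (args (snd x))"
    and ty: "\<forall>i<length qs. ptype (qs ! i) = args (snd x) ! i"
    and cs: "cs = map (\<lambda>q. (\<Gamma>, q)) qs"
  have x: "lv (snd x) \<le> k + 2" using \<Delta> c \<open>x \<in> \<Gamma>\<close> g by (auto simp: reg_env_def)
  have "low_binders k (qs ! i)" if i: "i < length qs" for i
  proof (rule low_binders_ptype)
    have "lv (args (snd x) ! i) < lv (snd x)" using lv_args len i by simp
    then show "lv (ptype (qs ! i)) \<le> Suc k" using ty i x by simp
  qed
  then show ?thesis using \<Delta> c cs by (auto simp: in_set_conv_nth)
next
  fix \<Gamma> x p0
  assume c: "(\<Delta>, p) = (\<Gamma>, close x p0)" and cs: "cs = [(insert x \<Gamma>, p0)]"
  then obtain tys e where "p0 = Lam tys e" using lam by (auto simp: is_Lam_def)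
  then show ?thesis using \<Delta> p c cs by (auto simp: close_def low_binders_def reg_env_def)
next
  fix \<Gamma> p0 f
  assume "(\<Delta>, p) = (\<Gamma>, replace_leaves p0 (\<lambda>i. case f i of None \<Rightarrow> Bot | Some n \<Rightarrow> Num n))"
    and "cs = [(\<Gamma>, p0)]"
  then show ?thesis using \<Delta> p low_binders_replace_leaves by auto
next
  fix \<Gamma> p0 d e
  assume "(\<Delta>, p) = (\<Gamma>, replace_leaves p0 (\<lambda>i. if i = 0 then d else e))"
    and "cs = [(\<Gamma>, p0), (\<Gamma>, Lam [] d), (\<Gamma>, Lam [] e)]"
  then show ?thesis using \<Delta> p low_binders_replace_leaves by (auto simp: low_binders_def)
next
  fix \<Gamma> \<sigma>s e qs
  assume lv: "lv (foldr Arr \<sigma>s N) \<le> k" and len: "length qs = length \<sigma>s"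
    and ty: "\<forall>i<length qs. ptype (qs ! i) = \<sigma>s ! i"
    and c: "(\<Delta>, p) = (\<Gamma>, Lam [] (eval (Plug \<sigma>s e qs)))"
    and cs: "cs = (\<Gamma>, Lam (foldr Arr \<sigma>s N # \<sigma>s) e) # map (\<lambda>q. (\<Gamma>, q)) qs"
  have \<sigma>s: "\<forall>\<sigma>\<in>set \<sigma>s. lv \<sigma> \<le> k" using lv lv_foldr_Arr by fastforce
  then have "low_binders k (qs ! i)" if "i < length qs" for i
    using ty len that by (intro low_binders_ptype) (simp add: le_SucI)
  then show ?thesis using \<Delta> c cs lv \<sigma>s by (auto simp: in_set_conv_nth low_binders_def)
qed (use \<Delta> in simp)

lemma rule_ok_concl_scoped_reg:
  assumes rule: "rule_ok k (\<Delta>, p) cs" and \<Delta>: "reg_env k g \<Delta>" and p: "low_binders k p"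
    and prems: "\<forall>(\<Delta>', p')\<in>set cs. scoped_reg k g [] p'"
  shows "scoped_reg k g [] p"
  using rule unfolding rule_ok_def
proof (elim disjE exE conjE)
  fix \<Gamma> x qs
  assume "(\<Delta>, p) = (\<Gamma>, Lam [] (VCase (FV x) qs Num))" and "x \<in> \<Gamma>"
    and cs: "cs = map (\<lambda>q. (\<Gamma>, q)) qs"
  moreover have "scoped_reg k g [0] q" if "q \<in> set qs" for q
    by (rule scoped_reg_closed) (use prems cs that in auto)
  ultimately show ?thesis using \<Delta> by (auto simp: reg_env_def reg_vr_def)
next
  fix \<Gamma> x p0
  assume c: "(\<Delta>, p) = (\<Gamma>, close x p0)" and "cs = [(insert x \<Gamma>, p0)]"
  then have p0: "scoped_reg k g [] p0" using prems by simp
  show ?thesis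
  proof (cases p0)
    case (Lam tys e)
    then have "lv (snd x) \<le> k" using p c by (simp add: close_def low_binders_def)
    then show ?thesis using c p0 Lam scoped_reg_close by simp
  qed (use c p0 in \<open>simp_all add: close_def\<close>)
next
  fix \<Gamma> p0 f
  assume "(\<Delta>, p) = (\<Gamma>, replace_leaves p0 (\<lambda>i. case f i of None \<Rightarrow> Bot | Some n \<Rightarrow> Num n))"
    and "cs = [(\<Gamma>, p0)]"
  then show ?thesis
    using prems by (auto intro!: scoped_reg_replace_leaves split: option.split)
next
  fix \<Gamma> p0 d e
  assume c: "(\<Delta>, p) = (\<Gamma>, replace_leaves p0 (\<lambda>i. if i = 0 then d else e))"
    and cs: "cs = [(\<Gamma>, p0), (\<Gamma>, Lam [] d), (\<Gamma>, Lam [] e)]"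
  have closed: "scoped_reg k g L t" if "scoped_reg k g [0] t" for L t
    using that by (rule scoped_reg_empty_blocks[rotated]) simp
  have d: "scoped_reg k g [0] d" and e: "scoped_reg k g [0] e"
    using prems cs by simp_all
  show ?thesis
    using prems c cs closed[OF d] closed[OF e] by (simp add: scoped_reg_replace_leaves)
next
  fix \<Gamma> \<sigma>s e qs
  assume len: "length qs = length \<sigma>s"
    and c: "(\<Delta>, p) = (\<Gamma>, Lam [] (eval (Plug \<sigma>s e qs)))"
    and cs: "cs = (\<Gamma>, Lam (foldr Arr \<sigma>s N # \<sigma>s) e) # map (\<lambda>q. (\<Gamma>, q)) qs"
  have "scoped_reg k g [] (Plug \<sigma>s e qs)"
    using prems cs len by (intro scoped_reg_Plug) auto
  then have "scoped_reg k g [0] (Plug \<sigma>s e qs)" by (rule scoped_reg_closed)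
  then show ?thesis using c by (simp add: scoped_reg_eval)
qed (use prems in simp)

lemma dconcl_in_dnodes: "dconcl T \<in> set (dnodes T)"
  by (cases T) simp

lemma valid_deriv_nodes_regular:
  assumes "valid_deriv k T" and "dconcl T = (\<Delta>, p)" and "reg_env k g \<Delta>" and "low_binders k p"
    and g: "lv (snd g) = k + 2"
  shows "\<forall>(\<Delta>', p')\<in>set (dnodes T). reg_env k g \<Delta>' \<and> scoped_reg k g [] p'"
  using assms(1-4)
proof (induction T arbitrary: \<Delta> p)
  case (DNode c ts)
  let ?cs = "map dconcl ts"
  have rule: "rule_ok k (\<Delta>, p) ?cs" and valid: "\<forall>t\<in>set ts. valid_deriv k t"
    using DNode.prems by auto
  have "\<forall>(\<Delta>', p')\<in>set ?cs. is_Lam p'"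
    using valid valid_deriv_is_Lam by (auto simp: split_beta)
  then have down: "\<forall>(\<Delta>', p')\<in>set ?cs. reg_env k g \<Delta>' \<and> low_binders k p'"
    using rule_ok_premises_regular[OF rule DNode.prems(3,4) g] by blast
  have sub: "\<forall>(\<Delta>', p')\<in>set (dnodes t). reg_env k g \<Delta>' \<and> scoped_reg k g [] p'"
    if "t \<in> set ts" for t
  proof -
    obtain \<Delta>' p' where t: "dconcl t = (\<Delta>', p')" by fastforce
    then have "reg_env k g \<Delta>' \<and> low_binders k p'" using down that by fastforce
    then show ?thesis using DNode.IH[OF that _ t] valid that by blast
  qed
  then have "\<forall>(\<Delta>', p')\<in>set ?cs. scoped_reg k g [] p'"
    using dconcl_in_dnodes by fastforce
  then have "scoped_reg k g [] p"
    using rule_ok_concl_scoped_reg[OF rule DNode.prems(3,4)] by blast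
  then show ?case using sub DNode.prems(2,3) by auto
qed

theorem proposition3p11:
  fixes k :: nat and g :: var and \<Gamma> :: "var set" and t :: tm and T :: dtree
  assumes "1 \<le> k"
    and "lv (snd g) = k + 2"
    and "finite \<Gamma>"
    and "g_regular k g \<Gamma> t"
    and "denotable k \<Gamma> t"
    and "valid_deriv k T"
    and "dconcl T = (\<Gamma>, t)"
  shows "\<forall>(\<Delta>, p) \<in> set (dnodes T). g_regular k g \<Delta> p"
proof -
  have \<Gamma>: "reg_env k g \<Gamma>" and t: "reg_tm k g t"
    using assms(4) by (simp_all add: g_regular_iff)
  have "\<forall>(\<Delta>, p)\<in>set (dnodes T). reg_env k g \<Delta> \<and> scoped_reg k g [] p"
    using valid_deriv_nodes_regular[OF assms(6,7) \<Gamma> reg_tm_low_binders[OF t] assms(2)] .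
  then show ?thesis by (auto simp: g_regular_iff dest: scoped_reg_reg_tm)
qed

end
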